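(* In the relaxed greedy algorithm described in the context, fix a phase $i\ge1$. For every inter-cluster edge $\{a,b\}$ of the cluster graph $H_{i-1}$, we have ${\tt sp}_{G'_{i-1}}(a,b)\le(2\delta+1)W_{i-1}$.
   Context: Setting. Let $G=(V,E)$ be an $n$-node $d$-dimensional $\alpha$-quasi unit ball graph ($0<\alpha\le1$): its vertices are points of $\mathbb{R}^d$, $|uv|$ is Euclidean distance, $|uv|\le\alpha$ implies $\{u,v\}\in E$, and $|uv|>1$ implies $\{u,v\}\notin E$. Edge weights are Euclidean lengths. ${\tt sp}_J(x,y)$ denotes shortest-path length in a graph $J$. Parameters: $r>1$ and $0<\delta<1$. Set $W_i=r^i\alpha/n$. $G'_{i-1}$ is any spanning subgraph of $G$; in the algorithm it is the partial spanner at the end of phase $i-1$. Cluster cover of $G'_{i-1}$ of radius $\delta W_{i-1}$: a set of centers $a$ with clusters $C_a$ partitioning $V$, such that - ${\tt sp}_{G'_{i-1}}(a,x)\le\delta W_{i-1}$ for $x\in C_a$; - ${\tt sp}_{G'_{i-1}}(a,b)>\delta W_{i-1}$ for distinct centers $a,b$. Cluster graph $H_{i-1}$: its vertex set is $V$ and it has two kinds of edges. - Intra-cluster edges: $\{a,x\}$ for each center $a$ and each $x\in C_a$. - Inter-cluster edges: $\{a,b\}$ for centers $a\ne b$ such that either ${\tt sp}_{G'_{i-1}}(a,b)\le W_{i-1}$, or some edge of $G'_{i-1}$ has one endpoint in $C_a$ and the other in $C_b$. Each edge $\{p,q\}$ of $H_{i-1}$ has weight ${\tt sp}_{G'_{i-1}}(p,q)$.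 *)

theory Defs
  imports "HOL-Analysis.Analysis"
begin

definition quasi_unit_ball_graph :: "real \<Rightarrow> 'a::euclidean_space set \<Rightarrow> 'a set set \<Rightarrow> bool" where
  "quasi_unit_ball_graph \<alpha> V E \<longleftrightarrow>
     finite V \<and> 0 < \<alpha> \<and> \<alpha> \<le> 1 \<and>
     E \<subseteq> {{u, v} | u v. u \<in> V \<and> v \<in> V \<and> u \<noteq> v} \<and>
     (\<forall>u\<in>V. \<forall>v\<in>V. u \<noteq> v \<and> dist u v \<le> \<alpha> \<longrightarrow> {u, v} \<in> E) \<and>
     (\<forall>u v. {u, v} \<in> E \<longrightarrow> dist u v \<le> 1)"

definition is_walk :: "'a set set \<Rightarrow> 'a list \<Rightarrow> bool" where
  "is_walk E p \<longleftrightarrow> p \<noteq> [] \<and> (\<forall>i. Suc i < length p \<longrightarrow> {p ! i, p ! Suc i} \<in> E)"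

definition walk_length :: "'a::metric_space list \<Rightarrow> real" where
  "walk_length p = (\<Sum>i<length p - 1. dist (p ! i) (p ! Suc i))"

text \<open>Shortest-path length w.r.t. Euclidean edge weights (infinity if no path).\<close>
definition sp :: "'a::metric_space set set \<Rightarrow> 'a \<Rightarrow> 'a \<Rightarrow> ereal" where
  "sp E x y = (INF p \<in> {p. is_walk E p \<and> hd p = x \<and> last p = y}. ereal (walk_length p))"

definition W :: "real \<Rightarrow> real \<Rightarrow> nat \<Rightarrow> nat \<Rightarrow> real" where
  "W r \<alpha> n i = r ^ i * \<alpha> / real n"

definition cluster_cover :: "'a::metric_space set \<Rightarrow> 'a set set \<Rightarrow> real \<Rightarrow> 'a set \<Rightarrow> ('a \<Rightarrow> 'a set) \<Rightarrow> bool" where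
  "cluster_cover V E' \<rho> A C \<longleftrightarrow>
     A \<subseteq> V \<and>
     (\<forall>a\<in>A. C a \<noteq> {} \<and> C a \<subseteq> V) \<and>
     (\<Union>a\<in>A. C a) = V \<and>
     (\<forall>a\<in>A. \<forall>b\<in>A. a \<noteq> b \<longrightarrow> C a \<inter> C b = {}) \<and>
     (\<forall>a\<in>A. \<forall>x\<in>C a. sp E' a x \<le> ereal \<rho>) \<and>
     (\<forall>a\<in>A. \<forall>b\<in>A. a \<noteq> b \<longrightarrow> sp E' a b > ereal \<rho>)"

definition inter_cluster_edge :: "'a::metric_space set set \<Rightarrow> real \<Rightarrow> 'a set \<Rightarrow> ('a \<Rightarrow> 'a set) \<Rightarrow> 'a \<Rightarrow> 'a \<Rightarrow> bool" where
  "inter_cluster_edge E' Wp A C a b \<longleftrightarrow>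
     a \<in> A \<and> b \<in> A \<and> a \<noteq> b \<and>
     (sp E' a b \<le> ereal Wp \<or> (\<exists>x\<in>C a. \<exists>y\<in>C b. {x, y} \<in> E'))"

end

theory Submission
  imports Defs
begin

text \<open>The centers a and b are either within distance W of each other already, or their clusters
  are joined by a spanner edge {x, y} of length at most W; in the latter case the triangle
  inequality for shortest paths, through x and y, gives the bound \<delta>W + W + \<delta>W.\<close>

lemma walk_length_singleton [simp]: "walk_length [x] = 0"
  by (simp add: walk_length_def)

lemma walk_length_Cons_Cons [simp]: "walk_length (x # y # p) = dist x y + walk_length (y # p)"
  unfolding walk_length_def by (simp add: sum.lessThan_Suc_shift del: sum.lessThan_Suc)

lemma walk_length_nonneg: "0 \<le> walk_length p"
  by (simp add: walk_length_def sum_nonneg)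

lemma is_walk_singleton [simp]: "is_walk E [x]"
  by (simp add: is_walk_def)

lemma is_walk_Cons_Cons [simp]: "is_walk E (x # y # p) \<longleftrightarrow> {x, y} \<in> E \<and> is_walk E (y # p)"
  unfolding is_walk_def by (auto simp: less_Suc_eq_0_disj)

lemma not_is_walk_Nil [simp]: "\<not> is_walk E []"
  by (simp add: is_walk_def)

lemma is_walk_append:
  "is_walk E p \<Longrightarrow> is_walk E q \<Longrightarrow> last p = hd q \<Longrightarrow> is_walk E (p @ tl q)"
proof (induction p rule: induct_list012)
  case (2 x)
  then show ?case
    by (cases q) simp_all
qed simp_all

lemma walk_length_append:
  "p \<noteq> [] \<Longrightarrow> q \<noteq> [] \<Longrightarrow> last p = hd q \<Longrightarrow>
    walk_length (p @ tl q) = walk_length p + walk_length q"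
proof (induction p rule: induct_list012)
  case (2 x)
  then show ?case
    by (cases q) simp_all
qed simp_all

lemma walk_length_rev: "walk_length (rev p) = walk_length p"
proof (induction p rule: induct_list012)
  case (3 x y p)
  have "walk_length (rev (y # p) @ tl [y, x]) = walk_length (rev (y # p)) + walk_length [y, x]"
    by (rule walk_length_append) simp_all
  with 3 show ?case
    by (simp add: dist_commute)
qed simp_all

lemma is_walk_rev: "is_walk E p \<Longrightarrow> is_walk E (rev p)"
proof (induction p rule: induct_list012)
  case (3 x y p)
  then have "is_walk E (rev (y # p) @ tl [y, x])"
    by (intro is_walk_append) (simp_all add: insert_commute)
  then show ?case
    by simp
qed simp_all

lemma sp_le_walk_length: "is_walk E p \<Longrightarrow> hd p = x \<Longrightarrow> last p = y \<Longrightarrow> sp E x y \<le> ereal (walk_length p)"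
  unfolding sp_def by (rule INF_lower) auto

lemma sp_nonneg: "0 \<le> sp E x y"
  unfolding sp_def by (rule INF_greatest) (simp add: walk_length_nonneg)

lemma sp_edge: "{x, y} \<in> E \<Longrightarrow> sp E x y \<le> ereal (dist x y)"
  using sp_le_walk_length[of E "[x, y]"] by simp

lemma sp_commute: "sp E x y = sp E y x"
proof -
  have "sp E x y \<le> sp E y x" for x y
    unfolding sp_def[of E y x]
  proof (rule INF_greatest)
    fix p assume "p \<in> {p. is_walk E p \<and> hd p = y \<and> last p = x}"
    then have "sp E x y \<le> ereal (walk_length (rev p))"
      by (intro sp_le_walk_length) (auto simp: is_walk_rev hd_rev last_rev)
    then show "sp E x y \<le> ereal (walk_length p)"
      by (simp add: walk_length_rev)
  qed
  then show ?thesis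
    by (simp add: order_antisym)
qed

lemma sp_triangle: "sp E x z \<le> sp E x y + sp E y z"
proof -
  define P where "P = {p. is_walk E p \<and> hd p = x \<and> last p = y}"
  define Q where "Q = {q. is_walk E q \<and> hd q = y \<and> last q = z}"
  have sp_xy: "sp E x y = (INF p\<in>P. ereal (walk_length p))"
    and sp_yz: "sp E y z = (INF q\<in>Q. ereal (walk_length q))"
    by (simp_all add: sp_def P_def Q_def)
  show ?thesis
  proof (cases "P = {} \<or> Q = {}")
    case True
    \<comment> \<open>then one side is the infimum over no walks, i.e. \<infinity>\<close>
    then show ?thesis
      using sp_nonneg[of E x y] sp_nonneg[of E y z] by (auto simp: sp_xy sp_yz top_ereal_def)
  next
    case False
    have "sp E x z \<le> (INF p\<in>P. INF q\<in>Q. ereal (walk_length p) + ereal (walk_length q))"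
    proof (intro INF_greatest)
      fix p q assume "p \<in> P" "q \<in> Q"
      then have "is_walk E p" "is_walk E q" "p \<noteq> []" "q \<noteq> []" "last p = hd q"
        by (auto simp: P_def Q_def)
      moreover have "hd (p @ tl q) = x" "last (p @ tl q) = z"
        using \<open>p \<in> P\<close> \<open>q \<in> Q\<close> \<open>p \<noteq> []\<close> by (auto simp: P_def Q_def, cases q, auto)
      ultimately have "sp E x z \<le> ereal (walk_length (p @ tl q))"
        by (intro sp_le_walk_length is_walk_append)
      then show "sp E x z \<le> ereal (walk_length p) + ereal (walk_length q)"
        by (simp add: walk_length_append \<open>p \<noteq> []\<close> \<open>q \<noteq> []\<close> \<open>last p = hd q\<close>)
    qed
    also have "\<dots> = (INF p\<in>P. ereal (walk_length p) + sp E y z)"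
      unfolding sp_yz using False
      by (intro INF_cong refl INF_ereal_add_right) (auto simp: walk_length_nonneg)
    also have "\<dots> = sp E x y + sp E y z"
      using False sp_nonneg[of E y z] by (simp add: sp_xy INF_ereal_add_left walk_length_nonneg)
    finally show ?thesis .
  qed
qed

theorem lemma2p5:
  fixes V :: "'a::euclidean_space set" and E E' :: "'a set set"
    and \<alpha> r \<delta> :: real and i :: nat and A :: "'a set" and C :: "'a \<Rightarrow> 'a set"
    and a b :: 'a
  assumes G: "quasi_unit_ball_graph \<alpha> V E"
    and n: "card V \<ge> 1"
    and r: "r > 1" and \<delta>: "0 < \<delta>" "\<delta> < 1"
    and i: "i \<ge> 1"
    and spanning: "E' \<subseteq> E"
    and phase: "\<forall>u v. {u, v} \<in> E' \<longrightarrow> dist u v \<le> W r \<alpha> (card V) (i - 1)"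
    and cover: "cluster_cover V E' (\<delta> * W r \<alpha> (card V) (i - 1)) A C"
    and edge: "inter_cluster_edge E' (W r \<alpha> (card V) (i - 1)) A C a b"
  shows "sp E' a b \<le> ereal ((2 * \<delta> + 1) * W r \<alpha> (card V) (i - 1))"
proof -
  define w where "w = W r \<alpha> (card V) (i - 1)"
  have "0 < w"
    using G n r by (simp add: w_def W_def quasi_unit_ball_graph_def)
  have "a \<in> A" "b \<in> A"
    using edge by (auto simp: inter_cluster_edge_def)
  have "sp E' a b \<le> ereal ((2 * \<delta> + 1) * w)"
  proof (cases "sp E' a b \<le> ereal w")
    case True
    moreover have "w \<le> (2 * \<delta> + 1) * w"
      using \<open>0 < w\<close> \<delta> by simp
    ultimately show ?thesis
      by (meson ereal_less_eq(3) order_trans)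
  next
    case False
    then obtain x y where "x \<in> C a" "y \<in> C b" "{x, y} \<in> E'"
      using edge by (auto simp: inter_cluster_edge_def w_def)
    then have "sp E' a x \<le> ereal (\<delta> * w)" "sp E' y b \<le> ereal (\<delta> * w)"
      using cover \<open>a \<in> A\<close> \<open>b \<in> A\<close> by (auto simp: cluster_cover_def w_def sp_commute[of E' y])
    moreover have "sp E' x y \<le> ereal w"
      using sp_edge[OF \<open>{x, y} \<in> E'\<close>] phase \<open>{x, y} \<in> E'\<close>
      by (auto simp: w_def intro: order_trans)
    moreover have "sp E' a b \<le> sp E' a x + (sp E' x y + sp E' y b)"
      using sp_triangle[of E' a b x] sp_triangle[of E' x b y] add_left_mono order_trans by blast
    ultimately have "sp E' a b \<le> ereal (\<delta> * w) + (ereal w + ereal (\<delta> * w))"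
      by (meson add_mono order_trans)
    then show ?thesis
      by (simp add: algebra_simps)
  qed
  then show ?thesis
    unfolding w_def .
qed

end
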